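(* Assume every node of $G$ belongs to at least one $h$-clique. Let $f^*$ be any maximum flow in $\mathcal{H}$. Then in the residual graph $\mathcal{H}_{f^*}$ there is a directed path from $t$ to every node $\lambda\in\Lambda$.
   Context: Let $G=(V,E)$ be a finite simple undirected graph and $h\ge2$. An $h$-clique is a set of $h$ pairwise adjacent nodes; $\mu_h(G[W])$ counts $h$-cliques inside $W$; for nonempty $W$, $\rho_h(W)=\mu_h(G[W])/|W|$; $\rho_h^*=\max_{\emptyset\ne W\subseteq V}\rho_h(W)$; $deg_G(v,h)$ is the number of $h$-cliques containing $v$; $\Lambda$ is the set of $(h-1)$-cliques of $G$ contained in some $h$-clique. Flow network $\mathcal{H}=(V_\mathcal{H},E_\mathcal{H},c)$: $V_\mathcal{H}=V\cup\Lambda\cup\{s,t\}$; for $v\in V$: arcs $(s,v)$ cap. $deg_G(v,h)$, $(v,t)$ cap. $h\rho_h^*$, $(v,s),(t,v)$ cap. $0$; for $\lambda\in\Lambda$, $v\in\lambda$: $(\lambda,v)$ cap. $+\infty$, $(v,\lambda)$ cap. $0$; for $\lambda\in\Lambda$, $v\in V$ with $\lambda\cup\{v\}$ an $h$-clique: $(v,\lambda)$ cap. $1$, $(\lambda,v)$ cap. $0$; no other arcs. A flow $f$ satisfies $f(u,v)\le c(u,v)$, $f(v,u)=-f(u,v)$, conservation at nodes other than $s,t$; value $\sum_v f(s,v)$. The residual graph $\mathcal{H}_{f}$ has an arc $(u,v)$ whenever $(u,v)\in E_\mathcal{H}$ and $c(u,v)-f(u,v)>0$. *)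

theory Defs
  imports Complex_Main "HOL-Library.Extended_Real"
begin

definition simple_graph :: "'a set \<Rightarrow> ('a \<Rightarrow> 'a \<Rightarrow> bool) \<Rightarrow> bool" where
  "simple_graph V E \<longleftrightarrow> finite V \<and> (\<forall>u v. E u v \<longrightarrow> u \<in> V \<and> v \<in> V)
     \<and> (\<forall>u v. E u v \<longrightarrow> E v u) \<and> (\<forall>u. \<not> E u u)"

definition is_clique :: "'a set \<Rightarrow> ('a \<Rightarrow> 'a \<Rightarrow> bool) \<Rightarrow> nat \<Rightarrow> 'a set \<Rightarrow> bool" where
  "is_clique V E h K \<longleftrightarrow> K \<subseteq> V \<and> finite K \<and> card K = h
     \<and> (\<forall>u\<in>K. \<forall>v\<in>K. u \<noteq> v \<longrightarrow> E u v)"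

definition mu :: "'a set \<Rightarrow> ('a \<Rightarrow> 'a \<Rightarrow> bool) \<Rightarrow> nat \<Rightarrow> 'a set \<Rightarrow> nat" where
  "mu V E h W = card {K. is_clique V E h K \<and> K \<subseteq> W}"

definition rho :: "'a set \<Rightarrow> ('a \<Rightarrow> 'a \<Rightarrow> bool) \<Rightarrow> nat \<Rightarrow> 'a set \<Rightarrow> real" where
  "rho V E h W = real (mu V E h W) / real (card W)"

definition rho_star :: "'a set \<Rightarrow> ('a \<Rightarrow> 'a \<Rightarrow> bool) \<Rightarrow> nat \<Rightarrow> real" where
  "rho_star V E h = Max {rho V E h W | W. W \<subseteq> V \<and> W \<noteq> {}}"

definition clique_deg :: "'a set \<Rightarrow> ('a \<Rightarrow> 'a \<Rightarrow> bool) \<Rightarrow> nat \<Rightarrow> 'a \<Rightarrow> nat" where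
  "clique_deg V E h v = card {K. is_clique V E h K \<and> v \<in> K}"

definition Lam :: "'a set \<Rightarrow> ('a \<Rightarrow> 'a \<Rightarrow> bool) \<Rightarrow> nat \<Rightarrow> 'a set set" where
  "Lam V E h = {l. is_clique V E (h - 1) l \<and> (\<exists>K. is_clique V E h K \<and> l \<subseteq> K)}"

datatype 'a node = Src | Snk | Vn 'a | Ln "'a set"

definition net_nodes :: "'a set \<Rightarrow> ('a \<Rightarrow> 'a \<Rightarrow> bool) \<Rightarrow> nat \<Rightarrow> 'a node set" where
  "net_nodes V E h = {Src, Snk} \<union> Vn ` V \<union> Ln ` Lam V E h"

definition net_arcs :: "'a set \<Rightarrow> ('a \<Rightarrow> 'a \<Rightarrow> bool) \<Rightarrow> nat \<Rightarrow> ('a node \<times> 'a node) set" where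
  "net_arcs V E h =
     {(Src, Vn v) | v. v \<in> V} \<union> {(Vn v, Snk) | v. v \<in> V}
   \<union> {(Vn v, Src) | v. v \<in> V} \<union> {(Snk, Vn v) | v. v \<in> V}
   \<union> {(Ln l, Vn v) | l v. l \<in> Lam V E h \<and> v \<in> l}
   \<union> {(Vn v, Ln l) | l v. l \<in> Lam V E h \<and> v \<in> l}
   \<union> {(Vn v, Ln l) | l v. l \<in> Lam V E h \<and> v \<in> V \<and> is_clique V E h (insert v l)}
   \<union> {(Ln l, Vn v) | l v. l \<in> Lam V E h \<and> v \<in> V \<and> is_clique V E h (insert v l)}"

text \<open>Capacities; pairs not listed (including listed zero-capacity arcs) get 0.\<close>
fun cap :: "'a set \<Rightarrow> ('a \<Rightarrow> 'a \<Rightarrow> bool) \<Rightarrow> nat \<Rightarrow> 'a node \<Rightarrow> 'a node \<Rightarrow> ereal" where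
  "cap V E h Src (Vn v) = (if v \<in> V then ereal (real (clique_deg V E h v)) else 0)"
| "cap V E h (Vn v) Snk = (if v \<in> V then ereal (real h * rho_star V E h) else 0)"
| "cap V E h (Ln l) (Vn v) = (if l \<in> Lam V E h \<and> v \<in> l then \<infinity> else 0)"
| "cap V E h (Vn v) (Ln l) =
     (if l \<in> Lam V E h \<and> v \<in> V \<and> is_clique V E h (insert v l) then 1 else 0)"
| "cap V E h _ _ = 0"

definition is_flow :: "'a set \<Rightarrow> ('a \<Rightarrow> 'a \<Rightarrow> bool) \<Rightarrow> nat \<Rightarrow> ('a node \<Rightarrow> 'a node \<Rightarrow> real) \<Rightarrow> bool" where
  "is_flow V E h f \<longleftrightarrow>
     (\<forall>u\<in>net_nodes V E h. \<forall>w\<in>net_nodes V E h. ereal (f u w) \<le> cap V E h u w)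
   \<and> (\<forall>u\<in>net_nodes V E h. \<forall>w\<in>net_nodes V E h. f w u = - f u w)
   \<and> (\<forall>u\<in>net_nodes V E h - {Src, Snk}. (\<Sum>w\<in>net_nodes V E h. f u w) = 0)"

definition flow_value :: "'a set \<Rightarrow> ('a node \<Rightarrow> 'a node \<Rightarrow> real) \<Rightarrow> real" where
  "flow_value V f = (\<Sum>v\<in>V. f Src (Vn v))"

definition is_max_flow :: "'a set \<Rightarrow> ('a \<Rightarrow> 'a \<Rightarrow> bool) \<Rightarrow> nat \<Rightarrow> ('a node \<Rightarrow> 'a node \<Rightarrow> real) \<Rightarrow> bool" where
  "is_max_flow V E h f \<longleftrightarrow> is_flow V E h f
     \<and> (\<forall>g. is_flow V E h g \<longrightarrow> flow_value V g \<le> flow_value V f)"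

definition residual_arcs :: "'a set \<Rightarrow> ('a \<Rightarrow> 'a \<Rightarrow> bool) \<Rightarrow> nat \<Rightarrow> ('a node \<Rightarrow> 'a node \<Rightarrow> real) \<Rightarrow> ('a node \<times> 'a node) set" where
  "residual_arcs V E h f = {(u, w). (u, w) \<in> net_arcs V E h \<and> cap V E h u w - ereal (f u w) > 0}"

end

theory Submission
  imports Defs
begin

text \<open>Let \<open>S\<close> be the set of nodes other than \<open>s\<close> that cannot be reached from \<open>t\<close> in the
  residual graph. No residual arc enters \<open>S\<close>, so every flow value leaving \<open>S\<close> is nonpositive,
  while conservation makes the net flow out of \<open>S\<close> zero; hence no flow crosses the cut at all.
  If some \<open>\<lambda> \<in> \<Lambda>\<close> lay in \<open>S\<close>, pick \<open>u\<close> with \<open>\<lambda> \<union> {u}\<close> an \<open>h\<close>-clique: the arc \<open>(u, \<lambda>)\<close> of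
  capacity 1 carries no flow, so \<open>u \<in> S\<close> as well, and then \<open>s \<rightarrow> u \<rightarrow> t\<close> carries no flow either.
  Since \<open>deg(u, h) \<ge> 1\<close> and \<open>h \<rho>\<^sub>h\<^sup>* \<ge> 1\<close>, one more unit can be pushed along it,
  contradicting maximality.\<close>

lemma sum_sum_skew_symmetric_eq_0:
  fixes f :: "'n \<Rightarrow> 'n \<Rightarrow> real"
  assumes "\<And>a b. a \<in> S \<Longrightarrow> b \<in> S \<Longrightarrow> f b a = - f a b"
  shows "(\<Sum>x\<in>S. \<Sum>w\<in>S. f x w) = 0"
proof -
  have "(\<Sum>x\<in>S. \<Sum>w\<in>S. f x w) = (\<Sum>w\<in>S. \<Sum>x\<in>S. f x w)" by (rule sum.swap)
  also have "\<dots> = (\<Sum>w\<in>S. \<Sum>x\<in>S. - f w x)"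
    by (intro sum.cong refl assms)
  also have "\<dots> = - (\<Sum>x\<in>S. \<Sum>w\<in>S. f x w)" by (simp add: sum_negf)
  finally show ?thesis by simp
qed

lemma net_flow_out_of_conserving_set_eq_0:
  fixes f :: "'n \<Rightarrow> 'n \<Rightarrow> real"
  assumes "finite N" "S \<subseteq> N"
    and skew: "\<And>a b. a \<in> N \<Longrightarrow> b \<in> N \<Longrightarrow> f b a = - f a b"
    and conserve: "\<And>a. a \<in> S \<Longrightarrow> (\<Sum>w\<in>N. f a w) = 0"
  shows "(\<Sum>x\<in>S. \<Sum>w\<in>N - S. f x w) = 0"
proof -
  have "(\<Sum>x\<in>S. \<Sum>w\<in>N. f x w) = 0"
    using conserve by (intro sum.neutral) auto
  moreover have "(\<Sum>w\<in>N. f x w) = (\<Sum>w\<in>N - S. f x w) + (\<Sum>w\<in>S. f x w)" for x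
    by (rule sum.subset_diff[OF assms(2,1)])
  moreover have "(\<Sum>x\<in>S. \<Sum>w\<in>S. f x w) = 0"
    using assms(2) by (intro sum_sum_skew_symmetric_eq_0 skew) auto
  ultimately show ?thesis by (simp add: sum.distrib)
qed

lemma flow_across_conserving_set_eq_0:
  fixes f :: "'n \<Rightarrow> 'n \<Rightarrow> real"
  assumes "finite N" "S \<subseteq> N"
    and "\<And>a b. a \<in> N \<Longrightarrow> b \<in> N \<Longrightarrow> f b a = - f a b"
    and "\<And>a. a \<in> S \<Longrightarrow> (\<Sum>w\<in>N. f a w) = 0"
    and nonpos: "\<And>x w. x \<in> S \<Longrightarrow> w \<in> N - S \<Longrightarrow> f x w \<le> 0"
    and "x \<in> S" "w \<in> N - S"
  shows "f x w = 0"
proof -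
  have finS: "finite S" using assms(1,2) finite_subset by blast
  have out_nonneg: "\<forall>y\<in>S. 0 \<le> (\<Sum>w\<in>N - S. - f y w)"
    by (intro ballI sum_nonneg) (simp add: nonpos)
  have "(\<Sum>y\<in>S. \<Sum>w\<in>N - S. - f y w) = 0"
    using net_flow_out_of_conserving_set_eq_0[OF assms(1-4)] by (simp add: sum_negf)
  then have "(\<Sum>w\<in>N - S. - f x w) = 0"
    using sum_nonneg_eq_0_iff[OF finS, of "\<lambda>y. \<Sum>w\<in>N - S. - f y w"] out_nonneg \<open>x \<in> S\<close>
    by blast
  moreover have "\<forall>w\<in>N - S. 0 \<le> - f x w"
    using \<open>x \<in> S\<close> by (simp add: nonpos)
  ultimately have "\<forall>w\<in>N - S. - f x w = 0"
    using sum_nonneg_eq_0_iff[of "N - S" "\<lambda>w. - f x w"] assms(1) by blast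
  then show ?thesis using \<open>w \<in> N - S\<close> by simp
qed

lemma cap_nonneg:
  assumes "rho_star V E h \<ge> 0"
  shows "cap V E h a b \<ge> 0"
  using assms by (cases "(V, E, h, a, b)" rule: cap.cases) auto

lemma cap_to_Src: "cap V E h a Src = 0"
  by (cases a) auto

lemma net_arc_if_cap_nonzero:
  assumes "cap V E h a b \<noteq> 0"
  shows "(a, b) \<in> net_arcs V E h"
  using assms
  by (cases "(V, E, h, a, b)" rule: cap.cases) (auto simp: net_arcs_def split: if_splits)

lemma net_arcs_sym:
  assumes "(a, b) \<in> net_arcs V E h"
  shows "(b, a) \<in> net_arcs V E h"
  using assms unfolding net_arcs_def by blast

lemma finite_net_nodes:
  assumes "finite V"
  shows "finite (net_nodes V E h)"
proof -
  have "Lam V E h \<subseteq> Pow V" unfolding Lam_def is_clique_def by auto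
  then have "finite (Lam V E h)" using assms by (meson finite_Pow_iff finite_subset)
  then show ?thesis using assms unfolding net_nodes_def by auto
qed

lemma flow_nonpos_if_not_residual:
  assumes "is_flow V E h f" "rho_star V E h \<ge> 0"
    and "x \<in> net_nodes V E h" "w \<in> net_nodes V E h"
    and "(w, x) \<notin> residual_arcs V E h f"
  shows "f x w \<le> 0"
proof (cases "(w, x) \<in> net_arcs V E h")
  case True
  then have "\<not> cap V E h w x - ereal (f w x) > 0"
    using assms(5) unfolding residual_arcs_def by auto
  moreover have "cap V E h w x \<ge> 0" using cap_nonneg[OF assms(2)] .
  ultimately have "f w x \<ge> 0" by (cases "cap V E h w x") auto
  moreover have "f x w = - f w x" using assms(1,3,4) unfolding is_flow_def by blast
  ultimately show ?thesis by simp
next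
  case False
  then have "cap V E h x w = 0" using net_arcs_sym net_arc_if_cap_nonzero by blast
  moreover have "ereal (f x w) \<le> cap V E h x w"
    using assms(1,3,4) unfolding is_flow_def by blast
  ultimately show ?thesis by simp
qed

text \<open>The source is left out of the cut set because it does not conserve flow; nothing flows
  into it from the cut set anyway, since arcs into the source have capacity zero.\<close>

lemma flow_across_residual_cut_eq_0:
  assumes "is_flow V E h f" "finite V" "rho_star V E h \<ge> 0"
  defines "S \<equiv> net_nodes V E h - {x. (Snk, x) \<in> (residual_arcs V E h f)\<^sup>*} - {Src}"
  assumes x: "x \<in> S" and w: "w \<in> net_nodes V E h - S"
  shows "f x w = 0"
proof (rule flow_across_conserving_set_eq_0[OF finite_net_nodes[OF assms(2)] _ _ _ _ x w])
  show "S \<subseteq> net_nodes V E h" unfolding S_def by auto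
  show "\<And>a b. a \<in> net_nodes V E h \<Longrightarrow> b \<in> net_nodes V E h \<Longrightarrow> f b a = - f a b"
    "\<And>a. a \<in> S \<Longrightarrow> (\<Sum>w\<in>net_nodes V E h. f a w) = 0"
    using assms(1) unfolding is_flow_def S_def by blast+
  show "f y z \<le> 0" if y: "y \<in> S" and z: "z \<in> net_nodes V E h - S" for y z
  proof (cases "z = Src")
    case True
    then have "ereal (f y z) \<le> cap V E h y Src"
      using assms(1) y z unfolding is_flow_def S_def by blast
    then show ?thesis by (simp add: cap_to_Src)
  next
    case False
    then have "(Snk, z) \<in> (residual_arcs V E h f)\<^sup>*" "(Snk, y) \<notin> (residual_arcs V E h f)\<^sup>*"
      using y z unfolding S_def by auto
    then have "(z, y) \<notin> residual_arcs V E h f" by (meson rtrancl.rtrancl_into_rtrancl)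
    then show ?thesis
      using flow_nonpos_if_not_residual[OF assms(1,3)] y z unfolding S_def by blast
  qed
qed

lemma unreachable_Vn_carries_no_flow:
  assumes flow: "is_flow V E h f" and "finite V" "rho_star V E h \<ge> 0" "u \<in> V"
    and unreached: "(Snk, Vn u) \<notin> (residual_arcs V E h f)\<^sup>*"
  shows "f Src (Vn u) = 0" "f (Vn u) Snk = 0"
proof -
  let ?N = "net_nodes V E h"
  have nodes: "Src \<in> ?N" "Snk \<in> ?N" "Vn u \<in> ?N"
    using \<open>u \<in> V\<close> unfolding net_nodes_def by auto
  note no_crossing = flow_across_residual_cut_eq_0[OF assms(1-3)]
  have "f (Vn u) Src = 0" "f (Vn u) Snk = 0"
    using no_crossing[of "Vn u" Src] no_crossing[of "Vn u" Snk] nodes unreached by auto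
  moreover have "f Src (Vn u) = - f (Vn u) Src"
    using flow nodes unfolding is_flow_def by blast
  ultimately show "f Src (Vn u) = 0" "f (Vn u) Snk = 0" by simp_all
qed

lemma unreachable_Vn_if_unreachable_Ln:
  assumes flow: "is_flow V E h f" and "finite V" "rho_star V E h \<ge> 0"
    and l: "l \<in> Lam V E h" and u: "u \<in> V" "is_clique V E h (insert u l)"
    and unreached: "(Snk, Ln l) \<notin> (residual_arcs V E h f)\<^sup>*"
  shows "(Snk, Vn u) \<notin> (residual_arcs V E h f)\<^sup>*"
proof
  let ?N = "net_nodes V E h" and ?A = "residual_arcs V E h f"
  assume reached: "(Snk, Vn u) \<in> ?A\<^sup>*"
  have nodes: "Vn u \<in> ?N" "Ln l \<in> ?N"
    using u(1) l unfolding net_nodes_def by auto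
  have "f (Ln l) (Vn u) = 0"
    using flow_across_residual_cut_eq_0[OF assms(1-3), of "Ln l" "Vn u"] nodes reached unreached
    by auto
  moreover have "f (Vn u) (Ln l) = - f (Ln l) (Vn u)"
    using flow nodes unfolding is_flow_def by blast
  ultimately have "(Vn u, Ln l) \<in> ?A"
    using l u unfolding residual_arcs_def net_arcs_def by auto
  then show False using reached unreached by (meson rtrancl.rtrancl_into_rtrancl)
qed

definition augment_via :: "'a \<Rightarrow> ('a node \<Rightarrow> 'a node \<Rightarrow> real) \<Rightarrow> 'a node \<Rightarrow> 'a node \<Rightarrow> real"
  where "augment_via u f a b = f a b +
    (if (a, b) = (Src, Vn u) \<or> (a, b) = (Vn u, Snk) then 1
     else if (a, b) = (Vn u, Src) \<or> (a, b) = (Snk, Vn u) then -1 else 0)"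

lemma is_flow_augment_via:
  assumes flow: "is_flow V E h f" and "finite V" "u \<in> V"
    and deg: "f Src (Vn u) + 1 \<le> real (clique_deg V E h u)"
    and dens: "f (Vn u) Snk + 1 \<le> real h * rho_star V E h"
  shows "is_flow V E h (augment_via u f)"
proof -
  let ?N = "net_nodes V E h"
  have nodes: "Src \<in> ?N" "Snk \<in> ?N" "Vn u \<in> ?N"
    using \<open>u \<in> V\<close> unfolding net_nodes_def by auto
  have cap: "\<And>a b. a \<in> ?N \<Longrightarrow> b \<in> ?N \<Longrightarrow> ereal (f a b) \<le> cap V E h a b"
    and skew: "\<And>a b. a \<in> ?N \<Longrightarrow> b \<in> ?N \<Longrightarrow> f b a = - f a b"
    and conserve: "\<And>a. a \<in> ?N - {Src, Snk} \<Longrightarrow> (\<Sum>w\<in>?N. f a w) = 0"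
    using flow unfolding is_flow_def by blast+
  have backward: "f (Vn u) Src \<le> 0" "f Snk (Vn u) \<le> 0"
    using cap[of "Vn u" Src] cap[of Snk "Vn u"] nodes by auto
  have "ereal (augment_via u f a b) \<le> cap V E h a b" if "a \<in> ?N" "b \<in> ?N" for a b
    using cap[OF that] skew[of Src "Vn u"] skew[of Snk "Vn u"] nodes backward deg dens \<open>u \<in> V\<close>
    by (auto simp: augment_via_def)
  moreover have "augment_via u f b a = - augment_via u f a b" if "a \<in> ?N" "b \<in> ?N" for a b
    using skew[OF that] by (auto simp: augment_via_def)
  moreover have "(\<Sum>w\<in>?N. augment_via u f a w) = 0" if a: "a \<in> ?N - {Src, Snk}" for a
  proof -
    have "(\<Sum>w\<in>?N. augment_via u f a w)
        = (\<Sum>w\<in>?N. f a w)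
          + (\<Sum>w\<in>?N. if a = Vn u then (if w = Snk then 1 else 0) - (if w = Src then 1 else 0)
                       else 0)"
      unfolding augment_via_def sum.distrib[symmetric] using a by (intro sum.cong refl) auto
    also have "\<dots> = 0"
      using conserve[OF a] finite_net_nodes[OF \<open>finite V\<close>] nodes
      by (cases "a = Vn u") (simp_all add: sum_subtractf)
    finally show ?thesis .
  qed
  ultimately show ?thesis unfolding is_flow_def by blast
qed

lemma flow_value_augment_via:
  assumes "finite V" "u \<in> V"
  shows "flow_value V (augment_via u f) = flow_value V f + 1"
proof -
  have "flow_value V (augment_via u f) = (\<Sum>v\<in>V. f Src (Vn v) + of_bool (v = u))"
    unfolding flow_value_def augment_via_def by (intro sum.cong refl) auto
  then show ?thesis using assms unfolding flow_value_def by (simp add: sum.distrib)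
qed

lemma max_flow_uses_Src_Vn_Snk:
  assumes "is_max_flow V E h f" "finite V" "u \<in> V"
    and "1 \<le> clique_deg V E h u" "1 \<le> real h * rho_star V E h"
  shows "f Src (Vn u) \<noteq> 0 \<or> f (Vn u) Snk \<noteq> 0"
proof (rule ccontr)
  assume "\<not> (f Src (Vn u) \<noteq> 0 \<or> f (Vn u) Snk \<noteq> 0)"
  then have "is_flow V E h (augment_via u f)"
    using assms is_flow_augment_via[OF _ assms(2,3)] unfolding is_max_flow_def by simp
  then have "flow_value V (augment_via u f) \<le> flow_value V f"
    using assms(1) unfolding is_max_flow_def by blast
  then show False using flow_value_augment_via[OF assms(2,3), of f] by simp
qed

lemma Lam_extends_to_clique:
  assumes "l \<in> Lam V E h" "h \<ge> 1"
  obtains u where "u \<in> V" "u \<notin> l" "is_clique V E h (insert u l)"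
proof -
  obtain K where K: "is_clique V E h K" "l \<subseteq> K" and l: "is_clique V E (h - 1) l"
    using assms(1) unfolding Lam_def by auto
  have cards: "card l = h - 1" "card K = h" "finite K" "finite l"
    using K l finite_subset unfolding is_clique_def by auto
  then have "\<not> K \<subseteq> l" using assms(2) card_mono[of l K] by auto
  then obtain u where u: "u \<in> K" "u \<notin> l" by auto
  have "insert u l = K"
    by (rule card_subset_eq[OF cards(3)]) (use u K(2) cards assms(2) in auto)
  then show thesis using that u K(1) unfolding is_clique_def by auto
qed

lemma clique_deg_pos:
  assumes "finite V" "is_clique V E h K" "v \<in> K"
  shows "clique_deg V E h v \<ge> 1"
proof -
  have "finite {K. is_clique V E h K \<and> v \<in> K}"
    by (rule finite_subset[of _ "Pow V"]) (auto simp: is_clique_def assms(1))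
  moreover have "K \<in> {K. is_clique V E h K \<and> v \<in> K}" using assms(2,3) by simp
  ultimately show ?thesis unfolding clique_deg_def by (auto simp: Suc_le_eq card_gt_0_iff)
qed

lemma mu_clique_pos:
  assumes "is_clique V E h K"
  shows "mu V E h K \<ge> 1"
proof -
  have "finite {K'. is_clique V E h K' \<and> K' \<subseteq> K}"
    by (rule finite_subset[of _ "Pow K"]) (use assms in \<open>auto simp: is_clique_def\<close>)
  moreover have "K \<in> {K'. is_clique V E h K' \<and> K' \<subseteq> K}" using assms by simp
  ultimately show ?thesis unfolding mu_def by (auto simp: Suc_le_eq card_gt_0_iff)
qed

lemma rho_le_rho_star:
  assumes "finite V" "W \<subseteq> V" "W \<noteq> {}"
  shows "rho V E h W \<le> rho_star V E h"
proof -
  have "{rho V E h W | W. W \<subseteq> V \<and> W \<noteq> {}} \<subseteq> rho V E h ` Pow V" by auto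
  then have "finite {rho V E h W | W. W \<subseteq> V \<and> W \<noteq> {}}" using assms(1) finite_subset by blast
  then show ?thesis unfolding rho_star_def by (rule Max_ge) (use assms in auto)
qed

lemma one_le_rho_star_mult:
  assumes "finite V" "is_clique V E h K" "h \<ge> 1"
  shows "1 \<le> real h * rho_star V E h"
proof -
  have K: "K \<subseteq> V" "card K = h" "finite K"
    using assms(2) unfolding is_clique_def by blast+
  then have "K \<noteq> {}" using assms(3) by auto
  have "1 / real h \<le> real (mu V E h K) / real h"
    using mu_clique_pos[OF assms(2)] by (intro divide_right_mono) auto
  also have "\<dots> = rho V E h K" unfolding rho_def using K(2) by simp
  also have "\<dots> \<le> rho_star V E h" using rho_le_rho_star[OF assms(1) K(1) \<open>K \<noteq> {}\<close>] .
  finally have "1 / real h \<le> rho_star V E h" .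
  then show ?thesis using assms(3) by (simp add: divide_le_eq mult.commute)
qed

theorem lemma6:
  fixes V :: "'a set" and E :: "'a \<Rightarrow> 'a \<Rightarrow> bool" and h :: nat
    and f :: "'a node \<Rightarrow> 'a node \<Rightarrow> real"
  assumes "simple_graph V E" and "h \<ge> 2"
    and "\<forall>v\<in>V. \<exists>K. is_clique V E h K \<and> v \<in> K"
    and "is_max_flow V E h f"
  shows "\<forall>l\<in>Lam V E h. (Snk, Ln l) \<in> (residual_arcs V E h f)\<^sup>+"
proof
  fix l assume l: "l \<in> Lam V E h"
  have finV: "finite V" and flow: "is_flow V E h f"
    using assms(1,4) unfolding simple_graph_def is_max_flow_def by blast+
  obtain u where u: "u \<in> V" "is_clique V E h (insert u l)"
    using Lam_extends_to_clique[OF l] assms(2) by auto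
  have dens: "1 \<le> real h * rho_star V E h" and deg: "1 \<le> clique_deg V E h u"
    using one_le_rho_star_mult[OF finV u(2)] clique_deg_pos[OF finV u(2)] assms(2) by auto
  then have "rho_star V E h \<ge> 0"
    using mult_nonneg_nonpos[of "real h" "rho_star V E h"] by fastforce
  show "(Snk, Ln l) \<in> (residual_arcs V E h f)\<^sup>+"
  proof (rule ccontr)
    assume "(Snk, Ln l) \<notin> (residual_arcs V E h f)\<^sup>+"
    then have "(Snk, Ln l) \<notin> (residual_arcs V E h f)\<^sup>*" by (simp add: rtrancl_eq_or_trancl)
    then have "(Snk, Vn u) \<notin> (residual_arcs V E h f)\<^sup>*"
      using unreachable_Vn_if_unreachable_Ln[OF flow finV \<open>rho_star V E h \<ge> 0\<close> l u] by blast
    then show False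
      using unreachable_Vn_carries_no_flow[OF flow finV \<open>rho_star V E h \<ge> 0\<close> u(1)]
        max_flow_uses_Src_Vn_Snk[OF assms(4) finV u(1) deg dens] by simp
  qed
qed

end
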